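(* Let $p$ be a prime, $q=p^n$, $\mathbb{Z}_q$ the valuation ring of the unramified extension of $\mathbb{Q}_p$ of degree $n$, and let $H(Z)=\sum_k h_k(x)Z^k\in\mathbb{Z}_q[x][Z]$ with $d_k:=\deg h_k$. Assume $h_0(x)\equiv 0\pmod p$ and $h_1(x)\equiv 1\pmod p$. Let $\Delta_{n,j}$ ($n\ge1$, $j\ge0$) be integers with $0\le\Delta_{n,0}\le\Delta_{n,1}\le\cdots$ for each $n$, put $\delta_j:=\Delta_{1,j}$, and assume: 1. $\Delta_{n+1,j}\ge\max\{\Delta_{n,j-l}+\delta_l : 0\le l\le j\}$ for all $n\ge1$, $j\ge0$; 2. $\delta_0\ge d_0$; 3. $\delta_j-\delta_{j-1}\ge d_1$ for all $j\ge1$; 4. $\delta_{k-1+j}\ge\Delta_{k,j}+d_k$ for all $k\ge2$, $j\ge0$. Then the unique solution $\alpha=\sum_{i\ge0}a_ix^i\in\mathbb{Z}_q\langle x\rangle$ of $H(\alpha)=0$ with $\alpha\equiv 0\pmod p$ satisfies $v_p(a_i)\ge j+2$ whenever $i\ge\delta_j+1$. Moreover, integers $\Delta_{n,j}$ satisfying these conditions always exist.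
   Context: $\mathbb{Z}_q\langle x\rangle$ is the ring of overconvergent power series $\sum_i a_ix^i\in\mathbb{Z}_q[[x]]$ with $\liminf_{i\to\infty}v_p(a_i)/i>0$; $v_p$ is the $p$-adic valuation. *)

theory Defs
  imports "HOL-Library.Extended_Real" "HOL-Library.Liminf_Limsup"
    "HOL-Computational_Algebra.Polynomial_FPS"
begin

text \<open>Abstract characterisation of \<open>Z_q\<close> (q = p^m): the ring type 'a together with
  the normalised p-adic valuation v is a complete discrete valuation ring with
  uniformiser p and residue field of cardinality p^m.  (A complete DVR of mixed
  characteristic with uniformiser p and finite residue field F_q is, up to isomorphism,
  exactly the valuation ring Z_q of the unramified extension of Q_p of degree m.)\<close>
definition is_Zq :: "nat \<Rightarrow> nat \<Rightarrow> ('a::comm_ring_1 \<Rightarrow> enat) \<Rightarrow> bool" where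
  "is_Zq p m v \<longleftrightarrow>
     m \<ge> 1 \<and>
     (\<forall>x. v x = \<infinity> \<longleftrightarrow> x = 0) \<and>
     (\<forall>x y. v (x * y) = v x + v y) \<and>
     (\<forall>x y. min (v x) (v y) \<le> v (x + y)) \<and>
     v (of_nat p) = 1 \<and>
     (\<forall>x. v x = 0 \<longleftrightarrow> x dvd 1) \<and>
     (\<forall>x. 1 \<le> v x \<longrightarrow> of_nat p dvd x) \<and>
     (\<forall>s::nat \<Rightarrow> 'a. (\<forall>k. \<exists>N. \<forall>i\<ge>N. enat k \<le> v (s i - s N)) \<longrightarrow>
         (\<exists>l. \<forall>k. \<exists>N. \<forall>i\<ge>N. enat k \<le> v (s i - l))) \<and>
     (\<exists>S. finite S \<and> card S = p ^ m \<and> (\<forall>x. \<exists>!s. s \<in> S \<and> 1 \<le> v (x - s)))"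

definition overconvergent :: "('a::comm_ring_1 \<Rightarrow> enat) \<Rightarrow> 'a fps \<Rightarrow> bool" where
  "overconvergent v f \<longleftrightarrow>
     0 < liminf (\<lambda>i. ereal_of_enat (v (fps_nth f i)) / ereal (real i))"

definition eval_H :: "'a::comm_ring_1 poly poly \<Rightarrow> 'a fps \<Rightarrow> 'a fps" where
  "eval_H H \<alpha> = (\<Sum>k\<le>degree H. fps_of_poly (coeff H k) * \<alpha> ^ k)"

definition Delta_ok :: "'a::comm_ring_1 poly poly \<Rightarrow> (nat \<Rightarrow> nat \<Rightarrow> int) \<Rightarrow> bool" where
  "Delta_ok H \<Delta> \<longleftrightarrow>
     (\<forall>n\<ge>1. 0 \<le> \<Delta> n 0 \<and> (\<forall>j. \<Delta> n j \<le> \<Delta> n (Suc j))) \<and>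
     (\<forall>n\<ge>1. \<forall>j. \<forall>l\<le>j. \<Delta> n (j - l) + \<Delta> 1 l \<le> \<Delta> (n + 1) j) \<and>
     int (degree (coeff H 0)) \<le> \<Delta> 1 0 \<and>
     (\<forall>j\<ge>1. int (degree (coeff H 1)) \<le> \<Delta> 1 j - \<Delta> 1 (j - 1)) \<and>
     (\<forall>k\<ge>2. coeff H k \<noteq> 0 \<longrightarrow>
        (\<forall>j. \<Delta> k j + int (degree (coeff H k)) \<le> \<Delta> 1 (k - 1 + j)))"

end

theory Submission
  imports Defs
begin

text \<open>Since \<open>h\<^sub>0 \<equiv> 0\<close> and \<open>h\<^sub>1 \<equiv> 1 (mod p)\<close>, the roots \<open>\<alpha> \<equiv> 0 (mod p)\<close> of \<open>H\<close> are the
  fixed points of \<open>\<alpha> \<mapsto> -(h\<^sub>0 + (h\<^sub>1 - 1) \<alpha> + \<Sum>\<^bsub>k \<ge> 2\<^esub> h\<^sub>k \<alpha>\<^sup>k)\<close>, a contraction for the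
  coefficientwise \<open>p\<close>-adic topology; completeness of \<open>Z\<^sub>q\<close> gives existence and uniqueness.
  For the growth of the coefficients one shows, by induction on \<open>j\<close> and inside it on \<open>n\<close>,
  that the coefficient of \<open>x\<^sup>i\<close> in \<open>\<alpha>\<^sup>n\<close> has valuation at least \<open>n + j + 1\<close> once \<open>i > \<Delta>\<^sub>n\<^sub>,\<^sub>j\<close>:
  for \<open>n = 1\<close> by reading the coefficient off the fixed-point equation (conditions 2--4), and
  for \<open>n + 1\<close> by splitting the Cauchy product \<open>\<alpha>\<^sup>n \<alpha>\<close> according to where the index of the
  factor \<open>\<alpha>\<close> falls among \<open>\<delta>\<^sub>0 \<le> \<delta>\<^sub>1 \<le> \<dots>\<close> (condition 1). The choice \<open>\<Delta>\<^sub>n\<^sub>,\<^sub>j = A j + n B\<close>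
  with \<open>A\<close> large satisfies all conditions, and the resulting linear growth of the valuations
  is overconvergence.\<close>

unbundle fps_syntax

locale complete_dvr =
  fixes v :: "'a::comm_ring_1 \<Rightarrow> enat" and p :: nat
  assumes v_eq_infinity_iff: "\<And>x. v x = \<infinity> \<longleftrightarrow> x = 0"
    and v_mult: "\<And>x y. v (x * y) = v x + v y"
    and v_add: "\<And>x y. min (v x) (v y) \<le> v (x + y)"
    and v_p: "v (of_nat p) = 1"
    and dvd_of_v_ge_1: "\<And>x. 1 \<le> v x \<Longrightarrow> of_nat p dvd x"
    and v_complete: "\<And>s::nat \<Rightarrow> 'a. (\<forall>k. \<exists>N. \<forall>i\<ge>N. enat k \<le> v (s i - s N)) \<Longrightarrow>
         (\<exists>l. \<forall>k. \<exists>N. \<forall>i\<ge>N. enat k \<le> v (s i - l))"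
begin

lemma v_zero [simp]: "v 0 = \<infinity>"
  using v_eq_infinity_iff by simp

lemma v_one [simp]: "v 1 = 0"
proof -
  have "v (of_nat p) = v (of_nat p) + v 1"
    using v_mult[of "of_nat p" 1] by simp
  then show ?thesis
    using v_p by (cases "v 1") (auto simp: one_enat_def zero_enat_def)
qed

lemma v_uminus [simp]: "v (- x) = v x"
proof -
  have "v (-1) + v (-1) = 0"
    using v_mult[of "-1" "-1"] by simp
  then have "v (-1) = 0" by simp
  then show ?thesis
    using v_mult[of "-1" x] by simp
qed

lemma v_minus_commute: "v (y - x) = v (x - y)"
  by (metis minus_diff_eq v_uminus)

lemma v_add_ge: "N \<le> v x \<Longrightarrow> N \<le> v y \<Longrightarrow> N \<le> v (x + y)"
  using v_add[of x y] by (meson min.boundedI order_trans)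

lemma v_sum_ge: "(\<And>i. i \<in> A \<Longrightarrow> N \<le> v (f i)) \<Longrightarrow> N \<le> v (sum f A)"
proof (induction A rule: infinite_finite_induct)
  case (insert x F)
  then show ?case by (simp add: v_add_ge)
qed simp_all

lemma v_mult_ge: "a \<le> v x \<Longrightarrow> b \<le> v y \<Longrightarrow> a + b \<le> v (x * y)"
  by (simp add: v_mult add_mono)

lemma v_ge_1_iff_dvd: "1 \<le> v x \<longleftrightarrow> of_nat p dvd x"
  using dvd_of_v_ge_1 by (auto simp: v_mult v_p)

lemma eq_0_of_v_unbounded: "(\<And>N. enat N \<le> v x) \<Longrightarrow> x = 0"
  by (metis enat_ord_simps(2) not_infinity_eq v_eq_infinity_iff lessI leD)

definition fps_val_ge :: "nat \<Rightarrow> 'a fps \<Rightarrow> bool" where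
  "fps_val_ge N f \<longleftrightarrow> (\<forall>i. enat N \<le> v (f $ i))"

lemma fps_val_ge_0 [simp]: "fps_val_ge 0 f"
  by (simp add: fps_val_ge_def flip: zero_enat_def)

lemma fps_val_ge_zero [simp]: "fps_val_ge N 0"
  by (simp add: fps_val_ge_def)

lemma fps_val_ge_uminus [simp]: "fps_val_ge N (- f) = fps_val_ge N f"
  by (simp add: fps_val_ge_def)

lemma fps_val_ge_add: "fps_val_ge N f \<Longrightarrow> fps_val_ge N g \<Longrightarrow> fps_val_ge N (f + g)"
  by (simp add: fps_val_ge_def v_add_ge)

lemma fps_val_ge_mono: "fps_val_ge N f \<Longrightarrow> M \<le> N \<Longrightarrow> fps_val_ge M f"
  by (meson enat_ord_simps(1) order_trans fps_val_ge_def)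

lemma fps_val_ge_sum: "(\<And>i. i \<in> A \<Longrightarrow> fps_val_ge N (f i)) \<Longrightarrow> fps_val_ge N (sum f A)"
  by (simp add: fps_val_ge_def fps_sum_nth v_sum_ge)

lemma fps_val_ge_mult: "fps_val_ge a f \<Longrightarrow> fps_val_ge b g \<Longrightarrow> fps_val_ge (a + b) (f * g)"
  unfolding fps_val_ge_def fps_mult_nth
  by (auto intro!: v_sum_ge v_mult_ge simp flip: plus_enat_simps(1))

lemma fps_val_ge_power: "fps_val_ge 1 f \<Longrightarrow> fps_val_ge k (f ^ k)"
proof (induction k)
  case (Suc k)
  then show ?case
    using fps_val_ge_mult[of 1 f k "f ^ k"] by simp
qed simp

lemma fps_eq_0_of_val_unbounded: "(\<And>N. fps_val_ge N f) \<Longrightarrow> f = 0"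
  by (rule fps_ext) (auto simp: fps_val_ge_def intro: eq_0_of_v_unbounded)

lemma fps_val_ge_1_iff_dvd: "fps_val_ge 1 f \<longleftrightarrow> (\<forall>i. of_nat p dvd f $ i)"
  unfolding fps_val_ge_def v_ge_1_iff_dvd[symmetric] by (simp add: one_enat_def)

lemma fps_limit_exists:
  assumes cauchy: "\<And>N i. N \<le> i \<Longrightarrow> fps_val_ge N (s i - s N)"
  shows "\<exists>a. \<forall>N. fps_val_ge N (a - s N)"
proof -
  have "\<exists>l. \<forall>k. \<exists>N. \<forall>i\<ge>N. enat k \<le> v (s i $ c - l)" for c
  proof (rule v_complete, intro allI exI impI)
    show "enat k \<le> v (s i $ c - s k $ c)" if "k \<le> i" for k i
      using cauchy[OF that] by (simp add: fps_val_ge_def)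
  qed
  then obtain l where l: "\<And>c k. \<exists>N. \<forall>i\<ge>N. enat k \<le> v (s i $ c - l c)"
    by metis
  have "fps_val_ge N (Abs_fps l - s N)" for N
    unfolding fps_val_ge_def
  proof
    fix c
    obtain N' where N': "\<And>i. N' \<le> i \<Longrightarrow> enat N \<le> v (s i $ c - l c)"
      using l by metis
    define i where "i = max N N'"
    have "(Abs_fps l - s N) $ c = (l c - s i $ c) + (s i $ c - s N $ c)"
      by simp
    moreover have "enat N \<le> v (s i $ c - s N $ c)"
      using cauchy[of N i] by (simp add: fps_val_ge_def i_def)
    moreover have "enat N \<le> v (l c - s i $ c)"
      using N'[of i] v_minus_commute[of "l c"] by (simp add: i_def)
    ultimately show "enat N \<le> v ((Abs_fps l - s N) $ c)"
      by (metis v_add_ge)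
  qed
  then show ?thesis by blast
qed

end

text \<open>The sum runs up to \<open>Suc (degree H)\<close> so that \<open>{..Suc (degree H)} = {0, 1} \<union> {2..Suc (degree H)}\<close>
  holds even for \<open>degree H = 0\<close>.\<close>

definition picard_map :: "'a::comm_ring_1 poly poly \<Rightarrow> 'a fps \<Rightarrow> 'a fps" where
  "picard_map H b = - (fps_of_poly (coeff H 0) + (fps_of_poly (coeff H 1) - 1) * b
      + (\<Sum>k\<in>{2..Suc (degree H)}. fps_of_poly (coeff H k) * b ^ k))"

lemma eval_H_eq_picard_map: "eval_H H b = b - picard_map H b"
proof -
  let ?f = "\<lambda>k. fps_of_poly (coeff H k) * b ^ k"
  have "eval_H H b = (\<Sum>k\<le>Suc (degree H). ?f k)"
    by (simp add: eval_H_def coeff_eq_0)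
  also have "{..Suc (degree H)} = {0, 1} \<union> {2..Suc (degree H)}"
    by auto
  also have "sum ?f \<dots> = sum ?f {0, 1} + sum ?f {2..Suc (degree H)}"
    by (rule sum.union_disjoint) auto
  finally show ?thesis
    by (simp add: picard_map_def algebra_simps)
qed

lemma picard_map_diff:
  "picard_map H b - picard_map H c = - ((fps_of_poly (coeff H 1) - 1) * (b - c)
      + (\<Sum>k\<in>{2..Suc (degree H)}. fps_of_poly (coeff H k) * (b ^ k - c ^ k)))"
  by (simp add: picard_map_def algebra_simps sum_subtractf flip: sum_distrib_left)

context complete_dvr
begin

lemma picard_map_contraction:
  assumes h1: "fps_val_ge 1 (fps_of_poly (coeff H 1) - 1)"
    and b: "fps_val_ge 1 b" and c: "fps_val_ge 1 c" and bc: "fps_val_ge M (b - c)"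
  shows "fps_val_ge (Suc M) (picard_map H b - picard_map H c)"
proof -
  have linear: "fps_val_ge (Suc M) ((fps_of_poly (coeff H 1) - 1) * (b - c))"
    using fps_val_ge_mult[OF h1 bc] by simp
  have higher: "fps_val_ge (Suc M) (fps_of_poly (coeff H k) * (b ^ k - c ^ k))"
    if k: "2 \<le> k" for k
  proof -
    have "fps_val_ge 1 (c ^ (k - Suc i) * b ^ i)" if "i < k" for i
      using fps_val_ge_mult[OF fps_val_ge_power[OF c] fps_val_ge_power[OF b],
          of "k - Suc i" i] that k
      by (elim fps_val_ge_mono) simp
    then have "fps_val_ge 1 (\<Sum>i<k. c ^ (k - Suc i) * b ^ i)"
      by (intro fps_val_ge_sum) simp
    then have "fps_val_ge (0 + (M + 1))
        (fps_of_poly (coeff H k) * ((b - c) * (\<Sum>i<k. c ^ (k - Suc i) * b ^ i)))"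
      by (intro fps_val_ge_mult bc fps_val_ge_0)
    then show ?thesis
      by (simp add: power_diff_sumr2)
  qed
  show ?thesis
    unfolding picard_map_diff fps_val_ge_uminus
    using linear higher by (intro fps_val_ge_add fps_val_ge_sum) auto
qed

lemma picard_map_val_ge_1:
  assumes h0: "fps_val_ge 1 (fps_of_poly (coeff H 0))"
    and h1: "fps_val_ge 1 (fps_of_poly (coeff H 1) - 1)"
    and b: "fps_val_ge 1 b"
  shows "fps_val_ge 1 (picard_map H b)"
proof -
  have "fps_val_ge 1 ((fps_of_poly (coeff H 1) - 1) * b)"
    using fps_val_ge_mult[OF h1 b] by (rule fps_val_ge_mono) simp
  moreover have "fps_val_ge 1 (fps_of_poly (coeff H k) * b ^ k)" if "2 \<le> k" for k
  proof -
    have "fps_val_ge (0 + k) (fps_of_poly (coeff H k) * b ^ k)"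
      by (intro fps_val_ge_mult fps_val_ge_power b fps_val_ge_0)
    then show ?thesis
      by (rule fps_val_ge_mono) (use that in simp)
  qed
  ultimately show ?thesis
    unfolding picard_map_def fps_val_ge_uminus
    using h0 by (intro fps_val_ge_add fps_val_ge_sum) auto
qed

lemma picard_map_fixpoint_unique:
  assumes h1: "fps_val_ge 1 (fps_of_poly (coeff H 1) - 1)"
    and b: "fps_val_ge 1 b" "picard_map H b = b"
    and c: "fps_val_ge 1 c" "picard_map H c = c"
  shows "b = c"
proof -
  have "fps_val_ge M (b - c)" for M
  proof (induction M)
    case (Suc M)
    then show ?case
      using picard_map_contraction[OF h1 b(1) c(1) Suc] b(2) c(2) by simp
  qed simp
  then show ?thesis
    using fps_eq_0_of_val_unbounded[of "b - c"] by simp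
qed

lemma picard_map_fixpoint_exists:
  assumes h0: "fps_val_ge 1 (fps_of_poly (coeff H 0))"
    and h1: "fps_val_ge 1 (fps_of_poly (coeff H 1) - 1)"
  shows "\<exists>a. fps_val_ge 1 a \<and> picard_map H a = a"
proof -
  define s where "s N = (picard_map H ^^ N) 0" for N
  have s_Suc: "s (Suc N) = picard_map H (s N)" for N
    by (simp add: s_def)
  have s_val: "fps_val_ge 1 (s N)" for N
  proof (induction N)
    case (Suc N)
    show ?case
      unfolding s_Suc by (rule picard_map_val_ge_1[OF h0 h1 Suc.IH])
  qed (simp add: s_def)
  have step: "fps_val_ge N (s (Suc N) - s N)" for N
  proof (induction N)
    case (Suc N)
    show ?case
      using picard_map_contraction[OF h1 s_val s_val Suc.IH] by (simp only: s_Suc)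
  qed simp
  have "fps_val_ge N (s (N + d) - s N)" for N d
  proof (induction d)
    case (Suc d)
    have "fps_val_ge N (s (Suc (N + d)) - s (N + d))"
      using step[of "N + d"] by (rule fps_val_ge_mono) simp
    from fps_val_ge_add[OF this Suc.IH] show ?case by simp
  qed simp
  then obtain a where a: "\<And>N. fps_val_ge N (a - s N)"
    using fps_limit_exists[of s] by (metis le_add_diff_inverse)
  have a_val: "fps_val_ge 1 a"
    using fps_val_ge_add[OF a[of 1] s_val[of 1]] by simp
  have "fps_val_ge N (picard_map H a - a)" for N
  proof -
    have "fps_val_ge (Suc N) (picard_map H a - s (Suc N))"
      unfolding s_Suc by (rule picard_map_contraction[OF h1 a_val s_val a])
    moreover have "fps_val_ge (Suc N) (s (Suc N) - a)"
      using a[of "Suc N"] fps_val_ge_uminus[of _ "a - s (Suc N)"] by simp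
    ultimately show ?thesis
      using fps_val_ge_add by (fastforce elim: fps_val_ge_mono)
  qed
  then have "picard_map H a = a"
    using fps_eq_0_of_val_unbounded[of "picard_map H a - a"] by simp
  with a_val show ?thesis by blast
qed

end

lemma Delta_ok_mono: "Delta_ok H \<Delta> \<Longrightarrow> 1 \<le> n \<Longrightarrow> j \<le> j' \<Longrightarrow> \<Delta> n j \<le> \<Delta> n j'"
  unfolding Delta_ok_def by (metis lift_Suc_mono_le)

lemma Delta_ok_superadditive:
  "Delta_ok H \<Delta> \<Longrightarrow> 1 \<le> n \<Longrightarrow> l \<le> j \<Longrightarrow> \<Delta> n (j - l) + \<Delta> 1 l \<le> \<Delta> (Suc n) j"
  unfolding Delta_ok_def by simp

lemma Delta_ok_degree_0: "Delta_ok H \<Delta> \<Longrightarrow> int (degree (coeff H 0)) \<le> \<Delta> 1 0"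
  unfolding Delta_ok_def by blast

lemma Delta_ok_degree_1:
  "Delta_ok H \<Delta> \<Longrightarrow> 1 \<le> j \<Longrightarrow> \<Delta> 1 (j - 1) + int (degree (coeff H 1)) \<le> \<Delta> 1 j"
  unfolding Delta_ok_def by fastforce

lemma Delta_ok_degree_ge_2:
  "Delta_ok H \<Delta> \<Longrightarrow> 2 \<le> k \<Longrightarrow> coeff H k \<noteq> 0 \<Longrightarrow>
    \<Delta> k j + int (degree (coeff H k)) \<le> \<Delta> 1 (k - 1 + j)"
  unfolding Delta_ok_def by blast

lemma threshold_cases:
  fixes f :: "nat \<Rightarrow> int"
  shows "x \<le> f 0 \<or> f j < x \<or> (\<exists>l. 1 \<le> l \<and> l \<le> j \<and> f (l - 1) < x \<and> x \<le> f l)"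
proof (induction j)
  case (Suc j)
  then show ?case
  proof (elim disjE)
    assume "f j < x"
    then show ?thesis
      by (cases "f (Suc j) < x") (auto intro!: exI[of _ "Suc j"])
  qed (blast, use le_SucI in blast)
qed auto

context complete_dvr
begin

lemma coeff_fps_of_poly_mult_val_ge:
  assumes c: "\<And>m. e \<le> v (coeff c m)"
    and f: "\<And>i'. B < int i' \<Longrightarrow> E \<le> v (f $ i')"
    and i: "B + int (degree c) < int i"
  shows "e + E \<le> v ((fps_of_poly c * f) $ i)"
  unfolding fps_mult_nth fps_of_poly_nth
proof (rule v_sum_ge)
  fix m assume m: "m \<in> {0..i}"
  show "e + E \<le> v (coeff c m * f $ (i - m))"
  proof (cases "m \<le> degree c")
    case True
    then have "B < int (i - m)"
      using i m by auto
    then show ?thesis by (intro v_mult_ge c f)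
  qed (simp add: coeff_eq_0)
qed

definition power_coeff_bound :: "(nat \<Rightarrow> nat \<Rightarrow> int) \<Rightarrow> 'a fps \<Rightarrow> nat \<Rightarrow> nat \<Rightarrow> bool" where
  "power_coeff_bound \<Delta> \<alpha> n j \<longleftrightarrow> (\<forall>i. \<Delta> n j < int i \<longrightarrow> enat (n + j + 1) \<le> v ((\<alpha> ^ n) $ i))"

lemma power_coeff_bound_Suc:
  assumes \<alpha>: "fps_val_ge 1 \<alpha>"
    and superadditive: "\<And>l. l \<le> j \<Longrightarrow> \<Delta> n (j - l) + \<Delta> 1 l \<le> \<Delta> (Suc n) j"
    and power: "\<And>t. t \<le> j \<Longrightarrow> power_coeff_bound \<Delta> \<alpha> n t"
    and one: "\<And>t. t \<le> j \<Longrightarrow> power_coeff_bound \<Delta> \<alpha> 1 t"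
  shows "power_coeff_bound \<Delta> \<alpha> (Suc n) j"
  unfolding power_coeff_bound_def
proof (intro allI impI)
  fix i assume i: "\<Delta> (Suc n) j < int i"
  have val_power: "enat k \<le> v ((\<alpha> ^ k) $ i)" for k i
    using fps_val_ge_power[OF \<alpha>, of k] by (simp add: fps_val_ge_def)
  have power': "enat (n + t + 1) \<le> v ((\<alpha> ^ n) $ a)" if "t \<le> j" "\<Delta> n t < int a" for t a
    using power[OF that(1)] that(2) by (simp add: power_coeff_bound_def)
  have one': "enat (t + 2) \<le> v (\<alpha> $ b)" if "t \<le> j" "\<Delta> 1 t < int b" for t b
    using one[OF that(1)] that(2) by (simp add: power_coeff_bound_def add.commute)
  have "(\<alpha> ^ Suc n) $ i = (\<Sum>a=0..i. (\<alpha> ^ n) $ a * \<alpha> $ (i - a))"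
    by (simp add: fps_mult_nth mult.commute[of \<alpha>])
  also have "enat (Suc n + j + 1) \<le> v \<dots>"
  proof (rule v_sum_ge)
    fix a assume "a \<in> {0..i}"
    then have a: "int i = int a + int (i - a)" by simp
    consider "int (i - a) \<le> \<Delta> 1 0" | "\<Delta> 1 j < int (i - a)"
      | l where "1 \<le> l" "l \<le> j" "\<Delta> 1 (l - 1) < int (i - a)" "int (i - a) \<le> \<Delta> 1 l"
      using threshold_cases[of "int (i - a)" "\<Delta> 1" j] by blast
    then show "enat (Suc n + j + 1) \<le> v ((\<alpha> ^ n) $ a * \<alpha> $ (i - a))"
    proof cases
      case 1
      moreover have "\<Delta> n j + \<Delta> 1 0 \<le> \<Delta> (Suc n) j"
        using superadditive[of 0] by simp
      ultimately have "\<Delta> n j < int a"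
        using i a by linarith
      then have "enat (n + j + 1) + enat 1 \<le> v ((\<alpha> ^ n) $ a * \<alpha> $ (i - a))"
        using val_power[of 1 "i - a"] by (intro v_mult_ge power') simp_all
      then show ?thesis by simp
    next
      case 2
      then have "enat n + enat (j + 2) \<le> v ((\<alpha> ^ n) $ a * \<alpha> $ (i - a))"
        by (intro v_mult_ge val_power one') simp_all
      then show ?thesis by simp
    next
      case 3
      then have "\<Delta> n (j - l) < int a"
        using superadditive[of l] i a by linarith
      then have "enat (n + (j - l) + 1) + enat ((l - 1) + 2) \<le> v ((\<alpha> ^ n) $ a * \<alpha> $ (i - a))"
        using 3 by (intro v_mult_ge power' one') simp_all
      then show ?thesis
        using 3 by simp
    qed
  qed
  finally show "enat (Suc n + j + 1) \<le> v ((\<alpha> ^ Suc n) $ i)" .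
qed

lemma linear_term_coeff_val_ge:
  assumes D: "Delta_ok H \<Delta>"
    and h1: "fps_val_ge 1 (fps_of_poly (coeff H 1) - 1)" and \<alpha>: "fps_val_ge 1 \<alpha>"
    and IH: "\<And>t. t < j \<Longrightarrow> power_coeff_bound \<Delta> \<alpha> 1 t"
    and i: "\<Delta> 1 j < int i"
  shows "enat (j + 2) \<le> v ((fps_of_poly (coeff H 1 - 1) * \<alpha>) $ i)"
proof (cases "j = 0")
  case True
  have "fps_val_ge (1 + 1) (fps_of_poly (coeff H 1 - 1) * \<alpha>)"
    using fps_val_ge_mult[OF h1 \<alpha>] by (simp add: fps_of_poly_diff)
  then show ?thesis
    using True by (simp add: fps_val_ge_def)
next
  case False
  have "enat 1 + enat (1 + (j - 1) + 1) \<le> v ((fps_of_poly (coeff H 1 - 1) * \<alpha>) $ i)"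
  proof (rule coeff_fps_of_poly_mult_val_ge)
    show "enat 1 \<le> v (coeff (coeff H 1 - 1) m)" for m
      using h1 by (simp add: fps_val_ge_def fps_of_poly_diff flip: fps_of_poly_nth)
    show "enat (1 + (j - 1) + 1) \<le> v (\<alpha> $ i')" if "\<Delta> 1 (j - 1) < int i'" for i'
      using IH[of "j - 1"] False that by (simp add: power_coeff_bound_def)
    have "degree (coeff H 1 - 1) \<le> degree (coeff H 1)"
      using degree_diff_le_max[of "coeff H 1" 1] by simp
    then show "\<Delta> 1 (j - 1) + int (degree (coeff H 1 - 1)) < int i"
      using Delta_ok_degree_1[OF D, of j] False i by linarith
  qed
  then show ?thesis
    using False by simp
qed

lemma higher_term_coeff_val_ge:
  assumes D: "Delta_ok H \<Delta>" and \<alpha>: "fps_val_ge 1 \<alpha>" and k: "2 \<le> k"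
    and IH: "\<And>t. t < j \<Longrightarrow> power_coeff_bound \<Delta> \<alpha> k t"
    and i: "\<Delta> 1 j < int i"
  shows "enat (j + 2) \<le> v ((fps_of_poly (coeff H k) * \<alpha> ^ k) $ i)"
proof (cases "coeff H k = 0 \<or> j + 2 \<le> k")
  case True
  have "fps_val_ge (0 + k) (fps_of_poly (coeff H k) * \<alpha> ^ k)"
    by (intro fps_val_ge_mult fps_val_ge_power \<alpha> fps_val_ge_0)
  then have "enat k \<le> v ((fps_of_poly (coeff H k) * \<alpha> ^ k) $ i)"
    by (simp add: fps_val_ge_def)
  with True show ?thesis
    by (auto elim: order_trans[rotated])
next
  case False
  define t where "t = j + 1 - k"
  have t: "t < j" "k + t + 1 = j + 2" "k - 1 + t = j"
    using False k by (auto simp: t_def)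
  have "0 + enat (k + t + 1) \<le> v ((fps_of_poly (coeff H k) * \<alpha> ^ k) $ i)"
  proof (rule coeff_fps_of_poly_mult_val_ge)
    show "enat (k + t + 1) \<le> v ((\<alpha> ^ k) $ i')" if "\<Delta> k t < int i'" for i'
      using IH[OF t(1)] that by (simp add: power_coeff_bound_def)
    show "\<Delta> k t + int (degree (coeff H k)) < int i"
      using Delta_ok_degree_ge_2[OF D k, of t] False t(3) i by auto
  qed simp
  then show ?thesis
    using t(2) by simp
qed

lemma power_coeff_bound_1:
  assumes D: "Delta_ok H \<Delta>"
    and h1: "fps_val_ge 1 (fps_of_poly (coeff H 1) - 1)"
    and \<alpha>: "fps_val_ge 1 \<alpha>" and fixed: "picard_map H \<alpha> = \<alpha>"
    and IH: "\<And>t n. t < j \<Longrightarrow> 1 \<le> n \<Longrightarrow> power_coeff_bound \<Delta> \<alpha> n t"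
  shows "power_coeff_bound \<Delta> \<alpha> 1 j"
  unfolding power_coeff_bound_def
proof (intro allI impI)
  fix i assume i: "\<Delta> 1 j < int i"
  have "\<alpha> $ i = - (coeff (coeff H 0) i + (fps_of_poly (coeff H 1 - 1) * \<alpha>) $ i
      + (\<Sum>k\<in>{2..Suc (degree H)}. (fps_of_poly (coeff H k) * \<alpha> ^ k) $ i))"
    by (subst fixed[symmetric]) (simp add: picard_map_def fps_sum_nth fps_of_poly_diff)
  moreover have "coeff (coeff H 0) i = 0"
    using Delta_ok_degree_0[OF D] Delta_ok_mono[OF D, of 1 0 j] i by (intro coeff_eq_0) simp
  ultimately have "enat (j + 2) \<le> v (\<alpha> $ i)"
    using linear_term_coeff_val_ge[OF D h1 \<alpha> _ i] higher_term_coeff_val_ge[OF D \<alpha> _ _ i] IH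
    by (simp only: v_uminus) (intro v_add_ge v_sum_ge; simp)
  then show "enat (1 + j + 1) \<le> v ((\<alpha> ^ 1) $ i)"
    by simp
qed

lemma fixpoint_power_coeff_bound:
  assumes D: "Delta_ok H \<Delta>"
    and h1: "fps_val_ge 1 (fps_of_poly (coeff H 1) - 1)"
    and \<alpha>: "fps_val_ge 1 \<alpha>" and fixed: "picard_map H \<alpha> = \<alpha>"
    and n: "1 \<le> n"
  shows "power_coeff_bound \<Delta> \<alpha> n j"
  using n
proof (induction j arbitrary: n rule: less_induct)
  case (less j)
  have one: "power_coeff_bound \<Delta> \<alpha> 1 t" if "t \<le> j" for t
    using that less.IH power_coeff_bound_1[OF D h1 \<alpha> fixed, of t] by (auto simp: le_less)
  from less.prems show ?case
  proof (induction n rule: nat_induct_at_least)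
    case base
    show ?case by (rule one) simp
  next
    case (Suc n)
    have "power_coeff_bound \<Delta> \<alpha> n t" if "t \<le> j" for t
      using that less.IH[of t n] Suc by (auto simp: le_less)
    then show ?case
      using Delta_ok_superadditive[OF D Suc.hyps] one by (intro power_coeff_bound_Suc[OF \<alpha>])
  qed
qed

lemma fixpoint_coeff_val_ge:
  assumes "Delta_ok H \<Delta>"
    and "fps_val_ge 1 (fps_of_poly (coeff H 1) - 1)"
    and "fps_val_ge 1 \<alpha>" and "picard_map H \<alpha> = \<alpha>"
    and "\<Delta> 1 j + 1 \<le> int i"
  shows "enat (j + 2) \<le> v (\<alpha> $ i)"
  using fixpoint_power_coeff_bound[OF assms(1-4), of 1 j] assms(5)
  by (simp add: power_coeff_bound_def)

end

lemma Delta_ok_linear: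
  assumes B: "degree (coeff H 0) \<le> B" and A1: "degree (coeff H 1) \<le> A"
    and A: "\<And>k. 2 \<le> k \<Longrightarrow> B + degree (coeff H k) \<le> A"
  shows "Delta_ok H (\<lambda>n j. int (A * j + n * B))"
  unfolding Delta_ok_def
proof (intro conjI allI impI)
  fix n j l :: nat assume "l \<le> j"
  then obtain d where "j = l + d"
    using le_Suc_ex by blast
  then have "A * (j - l) + n * B + (A * l + 1 * B) = A * j + (n + 1) * B"
    by (simp add: algebra_simps)
  then show "int (A * (j - l) + n * B) + int (A * l + 1 * B) \<le> int (A * j + (n + 1) * B)"
    by linarith
next
  fix j :: nat assume "1 \<le> j"
  then have "A * j + 1 * B = A + (A * (j - 1) + 1 * B)"
    by (cases j) (simp_all add: algebra_simps)
  then show "int (degree (coeff H 1)) \<le> int (A * j + 1 * B) - int (A * (j - 1) + 1 * B)"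
    using A1 by linarith
next
  fix k j :: nat assume k: "2 \<le> k"
  then obtain m where m: "k = m + 2"
    using le_Suc_ex by (metis add.commute)
  have "(B + degree (coeff H k)) * (m + 1) \<le> A * (m + 1)"
    using A[OF k] by (rule mult_right_mono) simp
  then have "A * j + k * B + degree (coeff H k) \<le> A * (k - 1 + j) + 1 * B"
    unfolding m by (simp add: algebra_simps)
  then show "int (A * j + k * B) + int (degree (coeff H k)) \<le> int (A * (k - 1 + j) + 1 * B)"
    by (simp only: of_nat_add[symmetric] of_nat_le_iff)
qed (use B in simp_all)

lemma Delta_ok_linear_exists: "\<exists>A B. 0 < A \<and> Delta_ok H (\<lambda>n j. int (A * j + n * B))"
proof (intro exI conjI)
  let ?B = "degree (coeff H 0)" and ?S = "\<Sum>k\<le>degree H. degree (coeff H k)"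
  have "degree (coeff H k) \<le> ?S" for k
    by (cases "k \<le> degree H") (auto intro: member_le_sum simp: coeff_eq_0)
  then show "Delta_ok H (\<lambda>n j. int ((?B + ?S + 1) * j + n * ?B))"
    by (intro Delta_ok_linear) (auto intro: le_SucI trans_le_add2)
qed simp

lemma ereal_le_enat_divide:
  fixes x :: enat and c :: real
  assumes "enat k \<le> x" "0 < i" "c * real i \<le> real k"
  shows "ereal c \<le> ereal_of_enat x / ereal (real i)"
proof (cases x)
  case (enat n)
  then have "c * real i \<le> real n"
    using assms by (meson enat_ord_simps(1) of_nat_le_iff order_trans)
  then show ?thesis
    using enat assms by (simp add: ereal_of_enat_def field_simps)
qed (use assms in simp)

lemma overconvergent_of_linear_bound:
  fixes v :: "'a::comm_ring_1 \<Rightarrow> enat"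
  assumes A: "0 < A" and bound: "\<And>i j. A * j + B + 1 \<le> i \<Longrightarrow> enat (j + 2) \<le> v (a $ i)"
  shows "overconvergent v a"
  unfolding overconvergent_def
proof -
  define c where "c = 1 / (2 * real A)"
  have "ereal c \<le> ereal_of_enat (v (a $ i)) / ereal (real i)" if i: "2 * (B + 1) \<le> i" for i
  proof (rule ereal_le_enat_divide)
    define j where "j = (i - B - 1) div A"
    have "A * j + (i - B - 1) mod A = i - B - 1" "(i - B - 1) mod A < A"
      using A by (simp_all add: j_def)
    then have "A * j + B + 1 \<le> i" and upper: "i \<le> 2 * (A * j) + 4 * A"
      using i by simp_all
    then show "enat (j + 2) \<le> v (a $ i)"
      by (intro bound)
    have "real i \<le> real (2 * (A * j) + 4 * A)"
      using upper by (simp only: of_nat_le_iff)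
    then show "c * real i \<le> real (j + 2)"
      using A by (simp add: c_def field_simps)
  qed (use i in simp)
  then have "ereal c \<le> liminf (\<lambda>i. ereal_of_enat (v (a $ i)) / ereal (real i))"
    by (intro Liminf_bounded) (auto simp: eventually_sequentially)
  moreover have "0 < c"
    using A by (simp add: c_def)
  ultimately show "0 < liminf (\<lambda>i. ereal_of_enat (v (a $ i)) / ereal (real i))"
    by (meson ereal_less(2) order_less_le_trans)
qed

lemma is_Zq_complete_dvr: "is_Zq p m v \<Longrightarrow> complete_dvr v p"
  unfolding is_Zq_def by unfold_locales simp_all

context complete_dvr
begin

lemma fixpoint_overconvergent:
  assumes h1: "fps_val_ge 1 (fps_of_poly (coeff H 1) - 1)"
    and \<alpha>: "fps_val_ge 1 \<alpha>" and fixed: "picard_map H \<alpha> = \<alpha>"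
  shows "overconvergent v \<alpha>"
proof -
  obtain A B where "0 < A" and D: "Delta_ok H (\<lambda>n j. int (A * j + n * B))"
    using Delta_ok_linear_exists by blast
  have "enat (j + 2) \<le> v (\<alpha> $ i)" if "A * j + B + 1 \<le> i" for i j
  proof (rule fixpoint_coeff_val_ge[OF D h1 \<alpha> fixed])
    have "int (A * j + B + 1) \<le> int i"
      using that by (simp only: of_nat_le_iff)
    then show "int (A * j + 1 * B) + 1 \<le> int i"
      by simp
  qed
  then show ?thesis
    by (rule overconvergent_of_linear_bound[OF \<open>0 < A\<close>])
qed

end

theorem lemma1:
  fixes p m :: nat and v :: "'a::comm_ring_1 \<Rightarrow> enat" and H :: "'a poly poly"
  assumes "prime p"
    and "is_Zq p m v"
    and h0: "\<forall>i. of_nat p dvd coeff (coeff H 0) i"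
    and h1: "\<forall>i. of_nat p dvd coeff (coeff H 1 - 1) i"
  shows "(\<exists>!\<alpha>. overconvergent v \<alpha> \<and> eval_H H \<alpha> = 0 \<and> (\<forall>i. of_nat p dvd fps_nth \<alpha> i))
       \<and> (\<forall>\<Delta> \<alpha>. Delta_ok H \<Delta> \<and> overconvergent v \<alpha> \<and> eval_H H \<alpha> = 0
              \<and> (\<forall>i. of_nat p dvd fps_nth \<alpha> i)
            \<longrightarrow> (\<forall>i j. \<Delta> 1 j + 1 \<le> int i \<longrightarrow> enat (j + 2) \<le> v (fps_nth \<alpha> i)))
       \<and> (\<exists>\<Delta>. Delta_ok H \<Delta>)"
proof -
  interpret complete_dvr v p
    using assms(2) by (rule is_Zq_complete_dvr)
  have h0': "fps_val_ge 1 (fps_of_poly (coeff H 0))"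
    unfolding fps_val_ge_1_iff_dvd fps_of_poly_nth by (rule h0)
  have "fps_val_ge 1 (fps_of_poly (coeff H 1 - 1))"
    unfolding fps_val_ge_1_iff_dvd fps_of_poly_nth by (rule h1)
  then have h1': "fps_val_ge 1 (fps_of_poly (coeff H 1) - 1)"
    by (simp add: fps_of_poly_diff)
  have root_iff: "overconvergent v \<alpha> \<and> eval_H H \<alpha> = 0 \<and> (\<forall>i. of_nat p dvd \<alpha> $ i)
      \<longleftrightarrow> fps_val_ge 1 \<alpha> \<and> picard_map H \<alpha> = \<alpha>" for \<alpha>
    using fixpoint_overconvergent[OF h1', of \<alpha>] eval_H_eq_picard_map[of H \<alpha>]
    unfolding fps_val_ge_1_iff_dvd by auto
  show ?thesis
    unfolding root_iff
    using picard_map_fixpoint_exists[OF h0' h1'] picard_map_fixpoint_unique[OF h1']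
      fixpoint_coeff_val_ge[OF _ h1'] Delta_ok_linear_exists
    by blast
qed

end
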